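(* Consider the multi-agent setting and the finite-time optimal control problems $\mathrm{FTOCP}^{(m)}_k(\hat N)$ described in the context. Fix a time $k$ and suppose that for every agent $m\in\{1,\dots,M\}$ some problem $\mathrm{FTOCP}^{(m)}_k(\hat N^{(m)})$ (for some integer $\hat N^{(m)}\ge 0$, possibly with the additional constraint $\|\mathbf{v}_{1|k}^{(m)}\|_2\le \bar a\hat N^{(m)}\Delta t$) is feasible, with an optimal solution denoted by a star, and that every agent applies its first optimal input $\mathbf{a}^{(m)\star}_{0|k}$, so that $\mathbf{s}^{(m)}_{k+1}=\mathbf{A}\mathbf{s}^{(m)}_k+\mathbf{B}\mathbf{a}^{(m)\star}_{0|k}$. Then: (a) for all agents $m\neq j$, $\|\mathbf{p}^{(m)}_{k+1}-\mathbf{p}^{(j)}_{k+1}\|_2\ge 2\rho$ (no collision at time $k+1$); (b) for all agents $m\neq j$ and all prediction steps $i=1,\dots,N$, the optimal contingency positions satisfy $\|\tilde{\mathbf{p}}^{(m)\star}_{i|k}-\tilde{\mathbf{p}}^{(j)\star}_{i|k}\|_2\ge 2\rho$.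
   Context: Setting. Let $\Delta t>0$, $\bar a>0$, $\bar v>0$, $\rho>0$, integers $M\ge 2$ and $N\ge1$, and $\tilde N:=\lceil \bar v/(\bar a\Delta t)\rceil$ with $\tilde N\le N-1$ ($\lceil r\rceil$ = smallest integer $\ge r$). Each agent $m=1,\dots,M$ has state $\mathbf{s}^{(m)}_k=(\mathbf{p}^{(m)}_k,\mathbf{v}^{(m)}_k)\in\mathbb{R}^3\times\mathbb{R}^3$ (position, velocity) and input $\mathbf{a}^{(m)}_k\in\mathbb{R}^3$, with exact dynamics $\mathbf{s}_{k+1}=\mathbf{A}\mathbf{s}_k+\mathbf{B}\mathbf{a}_k$, where $\mathbf{A}=\begin{bmatrix}I_3&\Delta t I_3\\0&I_3\end{bmatrix}$, $\mathbf{B}=\begin{bmatrix}\tfrac{(\Delta t)^2}{2}I_3\\ \Delta t I_3\end{bmatrix}$. Each agent is a ball of radius $\rho$ centred at its position; a collision means two centres are at distance $<2\rho$. Each agent $m$ has a position constraint set $\mathbb{S}^{(m)}\subseteq\mathbb{R}^3$ and a cost function $J^{(m)}$ of its nominal inputs and states. Every agent measures all agents' states exactly; there is no communication. Reference contingency plan. For a state $(\mathbf{p},\mathbf{v})$ let $n=\lceil\|\mathbf{v}\|_2/(\bar a\Delta t)\rceil$. The reference contingency trajectory starts at $(\mathbf{p},\mathbf{v})$ and applies the input $-\mathbf{v}/(n\Delta t)$ for steps $0,\dots,n-1$ and $\mathbf{0}$ afterwards (if $n=0$ the agent stays at $\mathbf{p}$). Denote by $\mathbf{r}^{(j)}_{i|k}$,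 $i=0,1,2,\dots$, the positions of the reference contingency trajectory computed from $\mathbf{s}^{(j)}_k$ (so $\mathbf{r}^{(j)}_{0|k}=\mathbf{p}^{(j)}_k$); every agent can compute it for every agent. Collision-avoidance constraint of agent $m$ w.r.t. agent $j\neq m$ at step $i$: with $d^{(j,m)}_{i|k}=\|\mathbf{r}^{(j)}_{i|k}-\mathbf{r}^{(m)}_{i|k}\|_2$ (assumed nonzero so that the constraint is defined), $\mathbf{g}^{(j,m)}_{i|k}=(\mathbf{r}^{(j)}_{i|k}-\mathbf{r}^{(m)}_{i|k})/d^{(j,m)}_{i|k}$ and $h^{(j,m)}_{i|k}=\mathbf{g}^{(j,m)\mathrm T}_{i|k}\mathbf{r}^{(m)}_{i|k}+\tfrac12 d^{(j,m)}_{i|k}-\rho$, a point $\mathbf{q}\in\mathbb{R}^3$ satisfies it iff $\mathbf{g}^{(j,m)\mathrm T}_{i|k}\mathbf{q}\le h^{(j,m)}_{i|k}$. $\mathrm{FTOCP}^{(m)}_k(\hat N)$, for an integer $\hat N\ge0$: minimize $J^{(m)}$ over $\mathbf{a}^{(m)}_{0|k},\dots,\mathbf{a}^{(m)}_{N-1|k}$ subject to: nominal states $\mathbf{s}^{(m)}_{0|k}=\mathbf{s}^{(m)}_k$, $\mathbf{s}^{(m)}_{i+1|k}=\mathbf{A}\mathbf{s}^{(m)}_{i|k}+\mathbf{B}\mathbf{a}^{(m)}_{i|k}$; $\|\mathbf{a}^{(m)}_{i|k}\|_2\le\bar a$ for $i=0,\dots,N-1$; the position of $\mathbf{s}^{(m)}_{i|k}$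 lies in $\mathbb{S}^{(m)}$ for $i=1,\dots,N$; contingency states $\tilde{\mathbf{s}}^{(m)}_{1|k}=\mathbf{s}^{(m)}_{1|k}$, and, writing $\mathbf{v}^{(m)}_{1|k}$ for the velocity of $\mathbf{s}^{(m)}_{1|k}$, contingency inputs $\tilde{\mathbf{a}}^{(m)}_{i|k}=-\mathbf{v}^{(m)}_{1|k}/(\hat N\Delta t)$ and $\tilde{\mathbf{s}}^{(m)}_{i+1|k}=\mathbf{A}\tilde{\mathbf{s}}^{(m)}_{i|k}+\mathbf{B}\tilde{\mathbf{a}}^{(m)}_{i|k}$ for $i=1,\dots,\hat N$, and $\tilde{\mathbf{s}}^{(m)}_{i|k}=\tilde{\mathbf{s}}^{(m)}_{\hat N+1|k}$ for $\hat N+1< i\le N$; the position of $\tilde{\mathbf{s}}^{(m)}_{i|k}$ lies in $\mathbb{S}^{(m)}$ for $i=2,\dots,\hat N+1$; and for every $j\ne m$ and every $i=1,\dots,N$ the position $\tilde{\mathbf{p}}^{(m)}_{i|k}$ of $\tilde{\mathbf{s}}^{(m)}_{i|k}$ satisfies the collision-avoidance constraint of agent $m$ w.r.t. $j$ at step $i$. *)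

theory Defs
  imports "HOL-Analysis.Analysis"
begin

text \<open>State of an agent: (position, velocity) in R^3 x R^3.\<close>
type_synonym st = "(real^3) \<times> (real^3)"

text \<open>Exact dynamics s' = A s + B a, written out blockwise.\<close>
definition dyn :: "real \<Rightarrow> st \<Rightarrow> real^3 \<Rightarrow> st" where
  "dyn dt s a = (fst s + dt *\<^sub>R snd s + (dt\<^sup>2 / 2) *\<^sub>R a, snd s + dt *\<^sub>R a)"

fun traj :: "real \<Rightarrow> st \<Rightarrow> (nat \<Rightarrow> real^3) \<Rightarrow> nat \<Rightarrow> st" where
  "traj dt s0 a 0 = s0"
| "traj dt s0 a (Suc i) = dyn dt (traj dt s0 a i) (a i)"

definition ref_n :: "real \<Rightarrow> real \<Rightarrow> st \<Rightarrow> nat" where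
  "ref_n abar dt s = nat \<lceil>norm (snd s) / (abar * dt)\<rceil>"

definition ref_input :: "real \<Rightarrow> real \<Rightarrow> st \<Rightarrow> nat \<Rightarrow> real^3" where
  "ref_input abar dt s i =
     (if i < ref_n abar dt s then - ((1 / (real (ref_n abar dt s) * dt)) *\<^sub>R snd s) else 0)"

definition ref_pos :: "real \<Rightarrow> real \<Rightarrow> st \<Rightarrow> nat \<Rightarrow> real^3" where
  "ref_pos abar dt s i = fst (traj dt s (ref_input abar dt s) i)"

text \<open>Contingency states: cont_state dt s1 hatN j is the contingency state with index j+1,
  starting from s1 = s_{1|k}; inputs -v_{1|k}/(hatN dt) for indices 1..hatN, then constant.\<close>
fun cont_state :: "real \<Rightarrow> st \<Rightarrow> nat \<Rightarrow> nat \<Rightarrow> st" where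
  "cont_state dt s1 hatN 0 = s1"
| "cont_state dt s1 hatN (Suc j) =
     (if j < hatN then dyn dt (cont_state dt s1 hatN j) (- ((1 / (real hatN * dt)) *\<^sub>R snd s1))
      else cont_state dt s1 hatN j)"

text \<open>Contingency position with index i (i >= 1).\<close>
definition cont_pos :: "real \<Rightarrow> st \<Rightarrow> nat \<Rightarrow> nat \<Rightarrow> real^3" where
  "cont_pos dt s1 hatN i = fst (cont_state dt s1 hatN (i - 1))"

definition ca_constraint :: "real \<Rightarrow> real^3 \<Rightarrow> real^3 \<Rightarrow> real^3 \<Rightarrow> bool" where
  "ca_constraint rho rj rm q =
     (let d = norm (rj - rm); g = (1 / d) *\<^sub>R (rj - rm); h = g \<bullet> rm + d / 2 - rho
      in g \<bullet> q \<le> h)"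

text \<open>Feasibility for FTOCP^{(m)}_k(hatN); sk j = state of agent j at time k; agents are 1..M.
  If extra holds, the additional constraint norm v_{1|k} <= abar hatN dt is imposed.\<close>
definition ftocp_feasible ::
  "real \<Rightarrow> real \<Rightarrow> real \<Rightarrow> nat \<Rightarrow> nat \<Rightarrow> (nat \<Rightarrow> st) \<Rightarrow> nat \<Rightarrow> (real^3) set \<Rightarrow> nat \<Rightarrow> bool
   \<Rightarrow> (nat \<Rightarrow> real^3) \<Rightarrow> bool" where
  "ftocp_feasible dt abar rho M N sk m Sm hatN extra a \<longleftrightarrow>
     (\<forall>i<N. norm (a i) \<le> abar) \<and>
     (\<forall>i\<in>{1..N}. fst (traj dt (sk m) a i) \<in> Sm) \<and>
     (\<forall>i\<in>{2..hatN+1}. cont_pos dt (traj dt (sk m) a 1) hatN i \<in> Sm) \<and>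
     (\<forall>j\<in>{1..M}. j \<noteq> m \<longrightarrow> (\<forall>i\<in>{1..N}.
        ca_constraint rho (ref_pos abar dt (sk j) i) (ref_pos abar dt (sk m) i)
          (cont_pos dt (traj dt (sk m) a 1) hatN i))) \<and>
     (extra \<longrightarrow> norm (snd (traj dt (sk m) a 1)) \<le> abar * real hatN * dt)"

definition ftocp_optimal ::
  "real \<Rightarrow> real \<Rightarrow> real \<Rightarrow> nat \<Rightarrow> nat \<Rightarrow> (nat \<Rightarrow> st) \<Rightarrow> nat \<Rightarrow> (real^3) set
   \<Rightarrow> ((nat \<Rightarrow> real^3) \<Rightarrow> (nat \<Rightarrow> st) \<Rightarrow> real) \<Rightarrow> nat \<Rightarrow> bool \<Rightarrow> (nat \<Rightarrow> real^3) \<Rightarrow> bool" where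
  "ftocp_optimal dt abar rho M N sk m Sm J hatN extra a \<longleftrightarrow>
     ftocp_feasible dt abar rho M N sk m Sm hatN extra a \<and>
     (\<forall>a'. ftocp_feasible dt abar rho M N sk m Sm hatN extra a' \<longrightarrow>
        J a (traj dt (sk m) a) \<le> J a' (traj dt (sk m) a'))"

end

theory Submission
  imports Defs
begin

text \<open>The constraint of agent \<open>m\<close> with respect to \<open>j\<close> confines its contingency position to
  the half-space on \<open>m\<close>'s side of the bisecting plane of the two reference positions, shifted
  away from that plane by \<open>\<rho>\<close>; agent \<open>j\<close> is confined to the mirror half-space. These two
  half-spaces are \<open>2\<rho>\<close> apart, which gives (b). The contingency trajectory starts at the first
  nominal state, which is the state reached at time \<open>k + 1\<close>, so (a) is (b) at \<open>i = 1\<close>.\<close>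

lemma inner_sgn_self: "sgn x \<bullet> x = norm x"
  for x :: "'a::real_inner"
  by (cases "x = 0") (simp_all add: sgn_div_norm power2_norm_eq_inner [symmetric] power2_eq_square)

lemma halfspaces_beyond_bisector_separate:
  fixes a b p q :: "'a::real_inner"
  assumes "sgn (b - a) \<bullet> p \<le> sgn (b - a) \<bullet> midpoint a b - rho"
    and "sgn (a - b) \<bullet> q \<le> sgn (a - b) \<bullet> midpoint a b - rho"
  shows "2 * rho \<le> norm (p - q)"
proof -
  have "2 * rho \<le> sgn (b - a) \<bullet> (q - p)"
    using assms sgn_minus[of "b - a"] by (simp add: inner_diff_right)
  also have "\<dots> \<le> norm (sgn (b - a)) * norm (q - p)"
    by (rule norm_cauchy_schwarz)
  also have "\<dots> \<le> norm (p - q)"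
    by (simp add: norm_sgn norm_minus_commute)
  finally show ?thesis .
qed

lemma inner_sgn_midpoint:
  fixes a b :: "'a::real_inner"
  shows "sgn (b - a) \<bullet> midpoint a b = sgn (b - a) \<bullet> a + norm (b - a) / 2"
proof -
  have "sgn (b - a) \<bullet> midpoint a b = (sgn (b - a) \<bullet> a + sgn (b - a) \<bullet> b) / 2"
    by (simp add: midpoint_def inner_add_right)
  moreover have "sgn (b - a) \<bullet> b = sgn (b - a) \<bullet> a + norm (b - a)"
    using inner_sgn_self[of "b - a"] by (simp add: inner_diff_right)
  ultimately show ?thesis by simp
qed

text \<open>No hypothesis \<open>rj \<noteq> rm\<close> is needed: if the reference positions coincide, both sides
  degenerate (through \<open>x / 0 = 0\<close>) to \<open>0 \<le> - rho\<close>.\<close>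

lemma ca_constraint_eq_bisector:
  "ca_constraint rho rj rm q \<longleftrightarrow> sgn (rj - rm) \<bullet> q \<le> sgn (rj - rm) \<bullet> midpoint rm rj - rho"
  using inner_sgn_midpoint[of rj rm]
  unfolding ca_constraint_def Let_def sgn_div_norm inverse_eq_divide by linarith

lemma ca_constraints_separate:
  assumes "ca_constraint rho rj rm qm" and "ca_constraint rho rm rj qj"
  shows "2 * rho \<le> norm (qm - qj)"
  using assms unfolding ca_constraint_eq_bisector midpoint_sym[of rj rm]
  by (rule halfspaces_beyond_bisector_separate)

lemma ftocp_feasible_ca_constraint:
  assumes "ftocp_feasible dt abar rho M N sk m Sm hatN extra a"
    and "j \<in> {1..M}" and "j \<noteq> m" and "i \<in> {1..N}"
  shows "ca_constraint rho (ref_pos abar dt (sk j) i) (ref_pos abar dt (sk m) i)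
           (cont_pos dt (traj dt (sk m) a 1) hatN i)"
  using assms by (simp add: ftocp_feasible_def)

lemma cont_pos_first: "cont_pos dt s1 hatN 1 = fst s1"
  by (simp add: cont_pos_def)

theorem lemma1:
  fixes dt abar vbar rho :: real and M N k :: nat
    and s :: "nat \<Rightarrow> nat \<Rightarrow> st"
    and S :: "nat \<Rightarrow> (real^3) set"
    and J :: "nat \<Rightarrow> (nat \<Rightarrow> real^3) \<Rightarrow> (nat \<Rightarrow> st) \<Rightarrow> real"
    and hatN :: "nat \<Rightarrow> nat" and extra :: "nat \<Rightarrow> bool"
    and astar :: "nat \<Rightarrow> nat \<Rightarrow> real^3"
  assumes "dt > 0" and "abar > 0" and "vbar > 0" and "rho > 0"
    and "M \<ge> 2" and "N \<ge> 1"
    and "\<lceil>vbar / (abar * dt)\<rceil> \<le> int N - 1"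
    and nonzero: "\<forall>m\<in>{1..M}. \<forall>j\<in>{1..M}. j \<noteq> m \<longrightarrow> (\<forall>i\<in>{1..N}.
                    ref_pos abar dt (s j k) i \<noteq> ref_pos abar dt (s m k) i)"
    and opt: "\<forall>m\<in>{1..M}. ftocp_optimal dt abar rho M N (\<lambda>j. s j k) m (S m) (J m)
                (hatN m) (extra m) (astar m)"
    and step: "\<forall>m\<in>{1..M}. s m (Suc k) = dyn dt (s m k) (astar m 0)"
  shows "(\<forall>m\<in>{1..M}. \<forall>j\<in>{1..M}. m \<noteq> j \<longrightarrow>
            norm (fst (s m (Suc k)) - fst (s j (Suc k))) \<ge> 2 * rho) \<and>
         (\<forall>m\<in>{1..M}. \<forall>j\<in>{1..M}. m \<noteq> j \<longrightarrow> (\<forall>i\<in>{1..N}.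
            norm (cont_pos dt (traj dt (s m k) (astar m) 1) (hatN m) i
                - cont_pos dt (traj dt (s j k) (astar j) 1) (hatN j) i) \<ge> 2 * rho))"
proof -
  have feasible: "ftocp_feasible dt abar rho M N (\<lambda>j. s j k) m (S m) (hatN m) (extra m) (astar m)"
    if "m \<in> {1..M}" for m
    using opt that by (simp add: ftocp_optimal_def)
  have contingency: "norm (cont_pos dt (traj dt (s m k) (astar m) 1) (hatN m) i
                - cont_pos dt (traj dt (s j k) (astar j) 1) (hatN j) i) \<ge> 2 * rho"
    if "m \<in> {1..M}" and "j \<in> {1..M}" and "m \<noteq> j" and "i \<in> {1..N}" for m j i
    using that by (intro ca_constraints_separate[OF
        ftocp_feasible_ca_constraint[OF feasible[of m], of j i]
        ftocp_feasible_ca_constraint[OF feasible[of j], of m i]]) auto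
  have "1 \<in> {1..N}" using \<open>N \<ge> 1\<close> by simp
  have "norm (fst (s m (Suc k)) - fst (s j (Suc k))) \<ge> 2 * rho"
    if "m \<in> {1..M}" and "j \<in> {1..M}" and "m \<noteq> j" for m j
    using contingency[OF that \<open>1 \<in> {1..N}\<close>, unfolded cont_pos_first] step that by simp
  with contingency show ?thesis by blast
qed

end
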